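(* Let $q$ be a power of a prime $p$, let $n\ge 2$, and let $X=\{F=0\}\subset\mathbb{P}^n$ be a hypersurface of degree $d$ over $\mathbb{F}_q$ such that $d\leq q+1$ and $F$ is not a $p$-th power. Then for every $1\le r\le n-1$ there exists a linear subspace $H\subset\mathbb{P}^n$ defined over $\mathbb{F}_q$ of dimension $r$ such that $H\not\subset X$ and the restriction $F|_H$ is not a $p$-th power.
   Context: $F\in\mathbb{F}_q[x_0,\dots,x_n]$ is a nonzero homogeneous polynomial. "$F$ is a $p$-th power" means $F=G^p$ for some polynomial $G$ (over $\overline{\mathbb{F}_q}$), equivalently all partial derivatives of $F$ vanish. *)

theory Defs
  imports "HOL-Library.Poly_Mapping" "HOL-Library.Cardinality"
begin

text \<open>Multivariate polynomials over a coefficient ring 'a: finitely supported maps from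
  monomials (finitely supported exponent vectors nat =>0 nat; variable x_i has index i)
  to coefficients.\<close>

type_synonym 'a mpoly = "(nat \<Rightarrow>\<^sub>0 nat) \<Rightarrow>\<^sub>0 'a"

definition mconst :: "'a::comm_semiring_1 \<Rightarrow> 'a mpoly" where
  "mconst c = Poly_Mapping.single 0 c"

definition mvar :: "nat \<Rightarrow> ('a::comm_semiring_1) mpoly" where
  "mvar i = Poly_Mapping.single (Poly_Mapping.single i 1) 1"

definition vars_within :: "('a::zero) mpoly \<Rightarrow> nat \<Rightarrow> bool" where
  "vars_within F n \<longleftrightarrow> (\<forall>m::nat \<Rightarrow>\<^sub>0 nat. m \<in> Poly_Mapping.keys F \<longrightarrow> Poly_Mapping.keys m \<subseteq> {..n})"

definition homogeneous :: "('a::zero) mpoly \<Rightarrow> nat \<Rightarrow> bool" where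
  "homogeneous F d \<longleftrightarrow> (\<forall>m::nat \<Rightarrow>\<^sub>0 nat. m \<in> Poly_Mapping.keys F \<longrightarrow> (\<Sum>i\<in>Poly_Mapping.keys m. Poly_Mapping.lookup m i) = d)"

definition is_pth_power :: "('a::field) mpoly \<Rightarrow> bool" where
  "is_pth_power F \<longleftrightarrow> (\<exists>G. F = G ^ CHAR('a))"

text \<open>Restriction of F to the linear subspace H parametrised by the (n+1)\<times>(r+1) matrix A:
  F|_H (y_0,...,y_r) = F(A y), i.e. x_i is replaced by \<Sum>_{j\<le>r} A i j * y_j.\<close>
definition lin_subst :: "('a::comm_semiring_1) mpoly \<Rightarrow> (nat \<Rightarrow> nat \<Rightarrow> 'a) \<Rightarrow> nat \<Rightarrow> 'a mpoly" where
  "lin_subst F A r =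
     (\<Sum>m\<in>Poly_Mapping.keys F. mconst (Poly_Mapping.lookup F m) *
        (\<Prod>i\<in>Poly_Mapping.keys m. (\<Sum>j\<le>r. mconst (A i j) * mvar j) ^ Poly_Mapping.lookup m i))"

text \<open>The columns A(-,0),...,A(-,r) of the (n+1)\<times>(r+1) matrix A are linearly independent in
  'a^(n+1); their span is then an (r+1)-dimensional subspace, i.e. a projective r-plane
  in P^n defined over 'a.\<close>
definition indep_columns :: "(nat \<Rightarrow> nat \<Rightarrow> 'a::field) \<Rightarrow> nat \<Rightarrow> nat \<Rightarrow> bool" where
  "indep_columns A n r \<longleftrightarrow>
     (\<forall>c::nat \<Rightarrow> 'a. (\<forall>i\<le>n. (\<Sum>j\<le>r. A i j * c j) = 0) \<longrightarrow> (\<forall>j\<le>r. c j = 0))"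

end

theory Submission
  imports Defs "HOL-Computational_Algebra.Polynomial" "HOL-Computational_Algebra.Primes" "HOL-Library.FuncSet"
begin

text \<open>Since \<open>F\<close> is not a \<open>p\<close>-th power, some partial derivative \<open>\<partial>F/\<partial>x\<^sub>k\<close> is a nonzero form of
  degree \<open>d - 1 \<le> q\<close>. Such a form does not vanish on all of \<open>\<bbbF>\<^sub>q\<^sup>n\<^sup>+\<^sup>1\<close>: if some monomial has all
  exponents \<open>< q\<close>, the orthogonality relations for the power sums \<open>\<Sum>\<^sub>x x\<^sup>j\<close> over \<open>\<bbbF>\<^sub>q\<close> detect
  its coefficient; otherwise the form contains \<open>c x\<^sub>j\<^sup>q\<close> and is nonzero at \<open>e\<^sub>j\<close>. So pick \<open>a\<close> with
  \<open>\<partial>F/\<partial>x\<^sub>k (a) \<noteq> 0\<close> and an \<open>r\<close>-plane \<open>H\<close> over \<open>\<bbbF>\<^sub>q\<close> containing the line \<open>a + t e\<^sub>k\<close>. Restricted to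
  this line, \<open>F\<close> becomes a polynomial in \<open>t\<close> whose linear coefficient is \<open>\<partial>F/\<partial>x\<^sub>k (a)\<close>, so its
  derivative is nonzero; hence \<open>F|\<^sub>H\<close> is not a \<open>p\<close>-th power, and in particular nonzero.\<close>

section \<open>Substituting univariate polynomials for the variables\<close>

definition msubst_monom :: "(nat \<Rightarrow> 'b::comm_semiring_1) \<Rightarrow> (nat \<Rightarrow>\<^sub>0 nat) \<Rightarrow> 'b" where
  "msubst_monom \<phi> m = (\<Prod>i\<in>Poly_Mapping.keys m. \<phi> i ^ Poly_Mapping.lookup m i)"

definition msubst :: "(nat \<Rightarrow> 'a::comm_semiring_1 poly) \<Rightarrow> 'a mpoly \<Rightarrow> 'a poly" where
  "msubst \<phi> P = (\<Sum>m\<in>Poly_Mapping.keys P. smult (Poly_Mapping.lookup P m) (msubst_monom \<phi> m))"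

lemma msubst_monom_superset:
  assumes "finite V" "Poly_Mapping.keys m \<subseteq> V"
  shows "msubst_monom \<phi> m = (\<Prod>i\<in>V. \<phi> i ^ Poly_Mapping.lookup m i)"
  unfolding msubst_monom_def
  by (rule prod.mono_neutral_left) (use assms in \<open>auto simp: in_keys_iff\<close>)

lemma msubst_monom_add: "msubst_monom \<phi> (m1 + m2) = msubst_monom \<phi> m1 * msubst_monom \<phi> m2"
proof -
  let ?V = "Poly_Mapping.keys m1 \<union> Poly_Mapping.keys m2"
  have "msubst_monom \<phi> (m1 + m2) = (\<Prod>i\<in>?V. \<phi> i ^ Poly_Mapping.lookup (m1 + m2) i)"
    by (rule msubst_monom_superset) (auto simp: keys_add)
  also have "\<dots> = (\<Prod>i\<in>?V. \<phi> i ^ Poly_Mapping.lookup m1 i) * (\<Prod>i\<in>?V. \<phi> i ^ Poly_Mapping.lookup m2 i)"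
    by (simp add: lookup_add power_add prod.distrib)
  also have "\<dots> = msubst_monom \<phi> m1 * msubst_monom \<phi> m2"
    by (subst (1 2) msubst_monom_superset[where V = ?V]) auto
  finally show ?thesis .
qed

lemma msubst_superset:
  assumes "finite S" "Poly_Mapping.keys P \<subseteq> S"
  shows "msubst \<phi> P = (\<Sum>m\<in>S. smult (Poly_Mapping.lookup P m) (msubst_monom \<phi> m))"
  unfolding msubst_def
  by (rule sum.mono_neutral_left) (use assms in \<open>auto simp: in_keys_iff\<close>)

lemma msubst_add: "msubst \<phi> (P + Q) = msubst \<phi> P + msubst \<phi> Q"
proof -
  let ?S = "Poly_Mapping.keys P \<union> Poly_Mapping.keys Q"
  have "msubst \<phi> (P + Q) = (\<Sum>m\<in>?S. smult (Poly_Mapping.lookup (P + Q) m) (msubst_monom \<phi> m))"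
    by (rule msubst_superset) (auto simp: keys_add)
  also have "\<dots> = (\<Sum>m\<in>?S. smult (Poly_Mapping.lookup P m) (msubst_monom \<phi> m))
                + (\<Sum>m\<in>?S. smult (Poly_Mapping.lookup Q m) (msubst_monom \<phi> m))"
    by (simp add: lookup_add sum.distrib smult_add_left)
  also have "\<dots> = msubst \<phi> P + msubst \<phi> Q"
    by (subst (1 2) msubst_superset[where S = ?S]) auto
  finally show ?thesis .
qed

lemma msubst_zero [simp]: "msubst \<phi> 0 = 0"
  by (simp add: msubst_def)

lemma msubst_sum: "msubst \<phi> (\<Sum>x\<in>S. f x) = (\<Sum>x\<in>S. msubst \<phi> (f x))"
  by (induction S rule: infinite_finite_induct) (auto simp: msubst_add)

lemma msubst_single: "msubst \<phi> (Poly_Mapping.single m c) = smult c (msubst_monom \<phi> m)"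
  by (cases "c = 0") (auto simp: msubst_def)

lemma sum_single_lookup: "(\<Sum>m\<in>Poly_Mapping.keys P. Poly_Mapping.single m (Poly_Mapping.lookup P m)) = P"
  by (rule poly_mapping_eqI) (simp add: lookup_sum lookup_single when_def in_keys_iff)

lemma msubst_mult: "msubst \<phi> (P * Q) = msubst \<phi> P * msubst \<phi> Q"
proof -
  have "P * Q = (\<Sum>m\<in>Poly_Mapping.keys P. \<Sum>m'\<in>Poly_Mapping.keys Q.
       Poly_Mapping.single (m + m') (Poly_Mapping.lookup P m * Poly_Mapping.lookup Q m'))"
    by (subst (1) sum_single_lookup[symmetric], subst (1) sum_single_lookup[of Q, symmetric])
       (simp add: sum_product mult_single)
  then have "msubst \<phi> (P * Q) = (\<Sum>m\<in>Poly_Mapping.keys P. \<Sum>m'\<in>Poly_Mapping.keys Q.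
       smult (Poly_Mapping.lookup P m * Poly_Mapping.lookup Q m') (msubst_monom \<phi> (m + m')))"
    by (simp add: msubst_sum msubst_single)
  also have "\<dots> = msubst \<phi> P * msubst \<phi> Q"
    by (simp add: msubst_def sum_product msubst_monom_add smult_smult mult.commute)
  finally show ?thesis .
qed

lemma msubst_prod: "msubst \<phi> (\<Prod>x\<in>S. f x) = (\<Prod>x\<in>S. msubst \<phi> (f x))"
  by (induction S rule: infinite_finite_induct)
     (auto simp: msubst_mult msubst_single msubst_monom_def simp flip: single_one)

lemma msubst_power: "msubst \<phi> (P ^ k) = msubst \<phi> P ^ k"
  using msubst_prod[of \<phi> "\<lambda>_. P" "{..<k}"] by simp

lemma msubst_mconst [simp]: "msubst \<phi> (mconst c) = [:c:]"
  by (simp add: mconst_def msubst_single msubst_monom_def)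

lemma msubst_mvar [simp]: "msubst \<phi> (mvar j) = \<phi> j"
  by (simp add: mvar_def msubst_single msubst_monom_def)

lemma msubst_lin_subst:
  "msubst \<phi> (lin_subst F A r) = msubst (\<lambda>i. \<Sum>j\<le>r. [:A i j:] * \<phi> j) F"
  by (simp only: lin_subst_def msubst_sum msubst_mult msubst_prod msubst_power msubst_mconst msubst_mvar)
     (simp add: msubst_def msubst_monom_def)

lemma msubst_cong:
  assumes "vars_within F n" "\<And>i. i \<le> n \<Longrightarrow> \<phi> i = \<psi> i"
  shows "msubst \<phi> F = msubst \<psi> F"
proof -
  have "msubst_monom \<phi> m = msubst_monom \<psi> m" if "m \<in> Poly_Mapping.keys F" for m
    unfolding msubst_monom_def
    by (rule prod.cong) (use that assms in \<open>auto simp: vars_within_def subset_iff\<close>)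
  then show ?thesis
    unfolding msubst_def by simp
qed

section \<open>Power sums over a finite field\<close>

lemma card_field_ge_2: "CARD('a::{finite,field}) \<ge> 2"
  using card_mono[of "UNIV :: 'a set" "{0, 1}"] by simp

lemma of_nat_card_field: "of_nat CARD('a::{finite,field}) = (0::'a)"
proof -
  have "(\<Sum>y\<in>(UNIV::'a set). y + 1) = (\<Sum>y\<in>UNIV. y)"
    by (rule sum.reindex_bij_witness[of _ "\<lambda>y. y - 1" "\<lambda>y. y + 1"]) auto
  then show ?thesis
    by (simp add: sum.distrib)
qed

lemma power_card_minus_1_field:
  fixes x :: "'a::{finite,field}"
  assumes "x \<noteq> 0"
  shows "x ^ (CARD('a) - 1) = 1"
proof -
  have "(\<Prod>y\<in>UNIV-{0}. x * y) = (\<Prod>y\<in>UNIV-{0}. y)"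
    by (rule prod.reindex_bij_witness[of _ "\<lambda>y. y / x" "\<lambda>y. x * y"]) (use assms in auto)
  moreover have "(\<Prod>y\<in>UNIV-{0}. x * y) = x ^ (CARD('a) - 1) * (\<Prod>y\<in>UNIV-{0}. y)"
    by (simp add: prod.distrib card_Diff_subset)
  ultimately show ?thesis
    by simp
qed

lemma sum_powers_card_minus_1: "(\<Sum>x\<in>UNIV. x ^ (CARD('a::{finite,field}) - 1)) = (-1::'a)"
proof -
  have pos: "CARD('a) - 1 > 0"
    using card_field_ge_2[where 'a = 'a] by simp
  have "(\<Sum>x::'a\<in>UNIV. x ^ (CARD('a) - 1)) = (\<Sum>x\<in>UNIV-{0}. x ^ (CARD('a) - 1))"
    using pos by (intro sum.mono_neutral_right) (auto simp: power_0_left)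
  also have "\<dots> = (\<Sum>x\<in>UNIV-{0::'a}. 1)"
    by (intro sum.cong refl power_card_minus_1_field) simp
  also have "\<dots> = of_nat CARD('a) - 1"
    using card_field_ge_2[where 'a = 'a] by (simp add: card_Diff_subset of_nat_diff)
  finally show ?thesis
    by (simp add: of_nat_card_field)
qed

lemma sum_powers_eq_0:
  assumes "j < CARD('a::{finite,field}) - 1"
  shows "(\<Sum>x\<in>UNIV. x ^ j) = (0::'a)"
proof (cases "j = 0")
  case True
  then show ?thesis
    by (simp add: of_nat_card_field)
next
  case False
  define p :: "'a poly" where "p = monom 1 j + [:-1:]"
  have "degree p = j"
    using False by (simp add: p_def degree_add_eq_left degree_monom_eq)
  then have "p \<noteq> 0"
    using False by auto
  have "card {x. poly p x = 0} \<le> j"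
    using card_poly_roots_bound[OF \<open>p \<noteq> 0\<close>] \<open>degree p = j\<close> by simp
  also have "j < card (UNIV - {0::'a})"
    using assms by (simp add: card_Diff_subset)
  finally have "\<not> UNIV - {0} \<subseteq> {x. poly p x = 0}"
    using card_mono[OF poly_roots_finite[OF \<open>p \<noteq> 0\<close>]] by (meson leD)
  then obtain b :: 'a where b: "b \<noteq> 0" "b ^ j \<noteq> 1"
    by (auto simp: p_def poly_monom)
  \<comment> \<open>Scaling by \<open>b\<close> permutes the field, so multiplying the sum by \<open>b ^ j \<noteq> 1\<close> leaves it unchanged.\<close>
  have "(\<Sum>x\<in>UNIV. x ^ j) = (\<Sum>x\<in>UNIV. (b * x) ^ j)"
    by (rule sum.reindex_bij_witness[of _ "\<lambda>y. b * y" "\<lambda>y. y / b"]) (use b in auto)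
  also have "\<dots> = b ^ j * (\<Sum>x\<in>UNIV. x ^ j)"
    by (simp add: power_mult_distrib sum_distrib_left)
  finally have "(b ^ j - 1) * (\<Sum>x\<in>UNIV. x ^ j) = 0"
    by (simp add: algebra_simps)
  then show ?thesis
    using b by simp
qed

section \<open>Forms of degree at most \<open>q\<close> over \<open>\<bbbF>\<^sub>q\<close>\<close>

text \<open>A form in \<open>x\<^sub>0, \<dots>, x\<^sub>n\<close> is written \<open>\<Sum>t\<in>T. c t * x\<^sup>\<mu>\<^sup>t\<close> with distinct exponent vectors \<open>\<mu> t\<close>
  vanishing beyond \<open>n\<close>.\<close>

lemma exponent_lt_if_same_degree:
  fixes \<mu> :: "'t \<Rightarrow> nat \<Rightarrow> nat"
  assumes inj: "inj_on \<mu> T"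
    and deg: "\<And>t. t \<in> T \<Longrightarrow> (\<Sum>i\<le>n. \<mu> t i) = e"
    and out: "\<And>t i. t \<in> T \<Longrightarrow> n < i \<Longrightarrow> \<mu> t i = 0"
    and t: "t \<in> T" "t' \<in> T" "t \<noteq> t'"
  shows "\<exists>i\<le>n. \<mu> t i < \<mu> t' i"
proof (rule ccontr)
  assume "\<not> ?thesis"
  then have ge: "\<And>i. i \<le> n \<Longrightarrow> \<mu> t' i \<le> \<mu> t i"
    by (auto simp: not_less)
  have "\<mu> t = \<mu> t'"
  proof
    fix i
    show "\<mu> t i = \<mu> t' i"
    proof (cases "i \<le> n")
      case True
      show ?thesis
      proof (rule ccontr)
        assume "\<mu> t i \<noteq> \<mu> t' i"
        then have "\<mu> t' i < \<mu> t i"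
          using ge[OF True] by simp
        then have "(\<Sum>i\<le>n. \<mu> t' i) < (\<Sum>i\<le>n. \<mu> t i)"
          using ge True by (intro sum_strict_mono_ex1) auto
        then show False
          using deg t by simp
      qed
    qed (use out t in auto)
  qed
  then show False
    using inj t by (auto dest: inj_onD)
qed

lemma reduced_form_nonvanishing:
  fixes c :: "'t \<Rightarrow> 'a::{finite,field}" and \<mu> :: "'t \<Rightarrow> nat \<Rightarrow> nat"
  assumes T: "finite T" and inj: "inj_on \<mu> T"
    and deg: "\<And>t. t \<in> T \<Longrightarrow> (\<Sum>i\<le>n. \<mu> t i) = e"
    and out: "\<And>t i. t \<in> T \<Longrightarrow> n < i \<Longrightarrow> \<mu> t i = 0"
    and t0: "t0 \<in> T" "c t0 \<noteq> 0" and reduced: "\<And>i. i \<le> n \<Longrightarrow> \<mu> t0 i < CARD('a)"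
  shows "\<exists>a. (\<Sum>t\<in>T. c t * (\<Prod>i\<le>n. a i ^ \<mu> t i)) \<noteq> 0"
proof (rule ccontr)
  assume "\<not> ?thesis"
  then have vanish: "\<And>a. (\<Sum>t\<in>T. c t * (\<Prod>i\<le>n. a i ^ \<mu> t i)) = 0"
    by auto
  define q where "q = CARD('a)"
  define P where "P = PiE {..n} (\<lambda>_. UNIV :: 'a set)"
  define E where "E t i = \<mu> t i + (q - 1 - \<mu> t0 i)" for t i
  \<comment> \<open>Sum the form against the monomial complementary to \<open>t0\<close> over all points:
      power sums kill every term except the one of \<open>t0\<close>.\<close>
  have "0 = (\<Sum>a\<in>P. (\<Sum>t\<in>T. c t * (\<Prod>i\<le>n. a i ^ \<mu> t i)) * (\<Prod>i\<le>n. a i ^ (q - 1 - \<mu> t0 i)))"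
    by (simp add: vanish)
  also have "\<dots> = (\<Sum>t\<in>T. c t * (\<Sum>a\<in>P. \<Prod>i\<le>n. a i ^ E t i))"
    by (simp add: E_def sum_distrib_right sum_distrib_left power_add prod.distrib mult_ac sum.swap[of _ P])
  also have "\<dots> = (\<Sum>t\<in>T. c t * (\<Prod>i\<le>n. \<Sum>x\<in>UNIV. x ^ E t i))"
    unfolding P_def by (simp add: prod_sum_PiE)
  also have "\<dots> = c t0 * (\<Prod>i\<le>n. \<Sum>x\<in>UNIV. x ^ E t0 i)"
  proof -
    have "c t * (\<Prod>i\<le>n. \<Sum>x\<in>UNIV. x ^ E t i) = 0" if t: "t \<in> T - {t0}" for t
    proof -
      obtain i where i: "i \<le> n" "\<mu> t i < \<mu> t0 i"
        using exponent_lt_if_same_degree[OF inj deg out, of t t0] t t0 by blast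
      then have "E t i < q - 1"
        using reduced[of i] unfolding E_def q_def by linarith
      then have "(\<Sum>x\<in>UNIV. x ^ E t i) = (0::'a)"
        unfolding q_def by (rule sum_powers_eq_0)
      then show ?thesis
        using i(1) by (auto simp: prod_zero_iff)
    qed
    then show ?thesis
      by (simp add: sum.remove[OF T t0(1)] sum.neutral)
  qed
  also have "\<dots> = c t0 * (-1) ^ card {..n}"
  proof -
    have "E t0 i = q - 1" if "i \<le> n" for i
      using reduced[OF that] unfolding E_def q_def by simp
    then show ?thesis
      by (simp add: q_def sum_powers_card_minus_1 del: One_nat_def)
  qed
  finally show False
    using t0 by simp
qed

lemma pure_power_form_nonvanishing:
  fixes c :: "'t \<Rightarrow> 'a::field" and \<mu> :: "'t \<Rightarrow> nat \<Rightarrow> nat"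
  assumes T: "finite T" and inj: "inj_on \<mu> T"
    and deg: "\<And>t. t \<in> T \<Longrightarrow> (\<Sum>i\<le>n. \<mu> t i) = e"
    and out: "\<And>t i. t \<in> T \<Longrightarrow> n < i \<Longrightarrow> \<mu> t i = 0"
    and t0: "t0 \<in> T" "c t0 \<noteq> 0" and j: "j \<le> n" and pure: "\<And>i. i \<noteq> j \<Longrightarrow> \<mu> t0 i = 0"
  shows "\<exists>a. (\<Sum>t\<in>T. c t * (\<Prod>i\<le>n. a i ^ \<mu> t i)) \<noteq> 0"
proof
  define a :: "nat \<Rightarrow> 'a" where "a i = (if i = j then 1 else 0)" for i
  have other: "c t * (\<Prod>i\<le>n. a i ^ \<mu> t i) = 0" if t: "t \<in> T - {t0}" for t
  proof -
    obtain i where i: "i \<le> n" "\<mu> t0 i < \<mu> t i"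
      using exponent_lt_if_same_degree[OF inj deg out, of t0 t] t t0 by blast
    have "(\<Sum>i\<le>n. \<mu> t0 i) = (\<Sum>i\<le>n. if i = j then \<mu> t0 j else 0)"
      by (rule sum.cong) (auto simp: pure)
    then have "\<mu> t0 j = e"
      using deg[OF t0(1)] j by simp
    moreover have "\<mu> t j \<le> e"
      using member_le_sum[of j "{..n}" "\<mu> t"] j deg[of t] t by auto
    ultimately have "\<mu> t j \<le> \<mu> t0 j"
      by simp
    then have "a i ^ \<mu> t i = 0"
      using i(2) by (auto simp: a_def)
    then show ?thesis
      using i(1) by (auto simp: prod_zero_iff)
  qed
  have "(\<Sum>t\<in>T. c t * (\<Prod>i\<le>n. a i ^ \<mu> t i)) = c t0 * (\<Prod>i\<le>n. a i ^ \<mu> t0 i)"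
    using other by (simp add: sum.remove[OF T t0(1)] sum.neutral)
  also have "(\<Prod>i\<le>n. a i ^ \<mu> t0 i) = 1"
    by (rule prod.neutral) (auto simp: a_def pure)
  finally show "(\<Sum>t\<in>T. c t * (\<Prod>i\<le>n. a i ^ \<mu> t i)) \<noteq> 0"
    using t0 by simp
qed

lemma homogeneous_form_nonvanishing:
  fixes c :: "'t \<Rightarrow> 'a::{finite,field}" and \<mu> :: "'t \<Rightarrow> nat \<Rightarrow> nat"
  assumes T: "finite T" "T \<noteq> {}" and inj: "inj_on \<mu> T"
    and c: "\<And>t. t \<in> T \<Longrightarrow> c t \<noteq> 0"
    and deg: "\<And>t. t \<in> T \<Longrightarrow> (\<Sum>i\<le>n. \<mu> t i) = e"
    and out: "\<And>t i. t \<in> T \<Longrightarrow> n < i \<Longrightarrow> \<mu> t i = 0"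
    and e: "e \<le> CARD('a)"
  shows "\<exists>a. (\<Sum>t\<in>T. c t * (\<Prod>i\<le>n. a i ^ \<mu> t i)) \<noteq> 0"
proof (cases "\<exists>t0\<in>T. \<forall>i\<le>n. \<mu> t0 i < CARD('a)")
  case True
  then show ?thesis
    using reduced_form_nonvanishing[OF T(1) inj deg out] c by blast
next
  case False
  \<comment> \<open>An exponent \<open>\<ge> q\<close> in a form of degree \<open>\<le> q\<close> forces a pure power \<open>x\<^sub>j\<^sup>q\<close>.\<close>
  obtain t0 where "t0 \<in> T"
    using T(2) by blast
  with False obtain j where t0: "t0 \<in> T" "j \<le> n" "CARD('a) \<le> \<mu> t0 j"
    by (auto simp: not_less)
  have "\<mu> t0 j + (\<Sum>i\<in>{..n}-{j}. \<mu> t0 i) = e"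
    using deg[OF t0(1)] t0(2) by (simp add: sum.remove[of "{..n}" j])
  then have "(\<Sum>i\<in>{..n}-{j}. \<mu> t0 i) = 0"
    using t0(3) e by linarith
  then have "\<mu> t0 i = 0" if "i \<noteq> j" for i
    using that out[OF t0(1), of i] by (cases "i \<le> n") auto
  then show ?thesis
    by (intro pure_power_form_nonvanishing[where ?t0.0 = t0 and j = j, OF T(1) inj deg out]) (use t0 c in auto)
qed

lemma CHAR_mpoly [simp]: "CHAR('a::comm_semiring_1 mpoly) = CHAR('a)"
proof (rule CHAR_eqI)
  show "of_nat CHAR('a) = (0::'a mpoly)"
    by (simp flip: single_of_nat)
next
  fix x assume "of_nat x = (0::'a mpoly)"
  then have "Poly_Mapping.lookup (of_nat x :: 'a mpoly) 0 = 0"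
    by simp
  then have "of_nat x = (0::'a)"
    by (simp add: lookup_of_nat)
  then show "CHAR('a) dvd x"
    by (simp add: of_nat_eq_0_iff_char_dvd)
qed

lemma lookup_map:
  "Poly_Mapping.lookup (Poly_Mapping.map f m) k =
     (if Poly_Mapping.lookup m k = 0 then 0 else f (Poly_Mapping.lookup m k))"
  by (simp add: Poly_Mapping.map.rep_eq when_def)

lemma single_power:
  "Poly_Mapping.single (k :: 'b \<Rightarrow>\<^sub>0 nat) (c::'a::comm_semiring_1) ^ n =
     Poly_Mapping.single (Poly_Mapping.map ((*) n) k) (c ^ n)"
proof (induction n)
  case 0
  have "Poly_Mapping.map ((*) 0) k = 0"
    by (rule poly_mapping_eqI) (simp add: lookup_map)
  then show ?case
    by (simp only: power_0 single_one)
next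
  case (Suc n)
  have "k + Poly_Mapping.map ((*) n) k = Poly_Mapping.map ((*) (Suc n)) k"
    by (rule poly_mapping_eqI) (simp add: lookup_map lookup_add)
  then show ?case
    using Suc by (simp only: power_Suc mult_single)
qed

lemma prime_CHAR_finite_field: "prime CHAR('a::{finite,field})"
  by (intro prime_CHAR_semidom finite_imp_CHAR_pos) simp

lemma surj_power_CHAR: "surj (\<lambda>x::'a::{finite,field}. x ^ CHAR('a))"
proof (rule finite_UNIV_inj_surj)
  show "inj (\<lambda>x::'a. x ^ CHAR('a))"
  proof (rule injI)
    fix x y :: 'a assume "x ^ CHAR('a) = y ^ CHAR('a)"
    moreover have "((x - y) + y) ^ CHAR('a) = (x - y) ^ CHAR('a) + y ^ CHAR('a)"
      by (rule freshmans_dream[OF prime_CHAR_finite_field refl])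
    ultimately have "(x - y) ^ CHAR('a) = 0"
      by simp
    then show "x = y"
      by simp
  qed
qed simp

lemma is_pth_power_if_exponents_divisible:
  fixes F :: "('a::{finite,field}) mpoly"
  assumes "\<And>m k. m \<in> Poly_Mapping.keys F \<Longrightarrow> CHAR('a) dvd Poly_Mapping.lookup m k"
  shows "is_pth_power F"
proof -
  define p where "p = CHAR('a)"
  obtain root :: "'a \<Rightarrow> 'a" where root: "\<And>c. root c ^ p = c"
    using surj_power_CHAR[where 'a = 'a] unfolding p_def by (metis surj_f_inv_f)
  define G where "G = (\<Sum>m\<in>Poly_Mapping.keys F.
    Poly_Mapping.single (Poly_Mapping.map (\<lambda>x. x div p) m) (root (Poly_Mapping.lookup F m)))"
  have divided: "Poly_Mapping.map ((*) p) (Poly_Mapping.map (\<lambda>x. x div p) m) = m"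
    if "m \<in> Poly_Mapping.keys F" for m
  proof (rule poly_mapping_eqI)
    fix k
    have "p dvd Poly_Mapping.lookup m k"
      using assms[OF that] unfolding p_def .
    then show "Poly_Mapping.lookup (Poly_Mapping.map ((*) p) (Poly_Mapping.map (\<lambda>x. x div p) m)) k =
        Poly_Mapping.lookup m k"
      using prime_gt_0_nat[OF prime_CHAR_finite_field] by (auto simp: lookup_map p_def elim!: dvdE)
  qed
  have "G ^ p = (\<Sum>m\<in>Poly_Mapping.keys F.
    Poly_Mapping.single (Poly_Mapping.map (\<lambda>x. x div p) m) (root (Poly_Mapping.lookup F m)) ^ p)"
    unfolding G_def by (rule freshmans_dream_sum) (simp_all add: prime_CHAR_finite_field p_def)
  also have "\<dots> = (\<Sum>m\<in>Poly_Mapping.keys F. Poly_Mapping.single m (Poly_Mapping.lookup F m))"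
    by (intro sum.cong refl) (simp add: single_power divided root)
  also have "\<dots> = F"
    by (rule sum_single_lookup)
  finally show ?thesis
    unfolding is_pth_power_def p_def by metis
qed

section \<open>Partial derivatives and restriction to a line\<close>

text \<open>The value of \<open>\<partial>F/\<partial>x\<^sub>k\<close> at \<open>a\<close>; the truncated exponent at \<open>i = k\<close> only occurs in terms
  carrying the factor \<open>0\<close>.\<close>
definition partial_deriv_at :: "'a::comm_semiring_1 mpoly \<Rightarrow> nat \<Rightarrow> nat \<Rightarrow> (nat \<Rightarrow> 'a) \<Rightarrow> 'a" where
  "partial_deriv_at F n k a = (\<Sum>m\<in>Poly_Mapping.keys F.
     Poly_Mapping.lookup F m * of_nat (Poly_Mapping.lookup m k) *
     (\<Prod>i\<le>n. a i ^ (Poly_Mapping.lookup m i - (if i = k then 1 else 0))))"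

lemma lowered_exponents:
  fixes M :: "(nat \<Rightarrow>\<^sub>0 nat) set"
  assumes vars: "\<And>m. m \<in> M \<Longrightarrow> Poly_Mapping.keys m \<subseteq> {..n}"
    and deg: "\<And>m. m \<in> M \<Longrightarrow> (\<Sum>i\<in>Poly_Mapping.keys m. Poly_Mapping.lookup m i) = d"
    and pos: "\<And>m. m \<in> M \<Longrightarrow> 0 < Poly_Mapping.lookup m k" and k: "k \<le> n"
  defines "\<mu> \<equiv> \<lambda>m i. Poly_Mapping.lookup m i - (if i = k then 1 else 0)"
  shows "inj_on \<mu> M"
    and "\<And>m. m \<in> M \<Longrightarrow> (\<Sum>i\<le>n. \<mu> m i) = d - 1"
    and "\<And>m i. m \<in> M \<Longrightarrow> n < i \<Longrightarrow> \<mu> m i = 0"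
proof -
  show "inj_on \<mu> M"
  proof (rule inj_onI, rule poly_mapping_eqI)
    fix m m' i assume "m \<in> M" "m' \<in> M" "\<mu> m = \<mu> m'"
    then show "Poly_Mapping.lookup m i = Poly_Mapping.lookup m' i"
      using pos[of m] pos[of m'] unfolding \<mu>_def by (cases "i = k") (auto dest: fun_cong[of _ _ i])
  qed
next
  fix m assume m: "m \<in> M"
  have "(\<Sum>i\<le>n. Poly_Mapping.lookup m i) = (\<Sum>i\<in>Poly_Mapping.keys m. Poly_Mapping.lookup m i)"
    by (rule sum.mono_neutral_right) (use vars[OF m] in \<open>auto simp: in_keys_iff\<close>)
  then have "(\<Sum>i\<le>n. Poly_Mapping.lookup m i) = d"
    using deg[OF m] by simp
  moreover have "(\<Sum>i\<le>n. Poly_Mapping.lookup m i) = Poly_Mapping.lookup m k + (\<Sum>i\<in>{..n}-{k}. Poly_Mapping.lookup m i)"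
    and "(\<Sum>i\<le>n. \<mu> m i) = (Poly_Mapping.lookup m k - 1) + (\<Sum>i\<in>{..n}-{k}. Poly_Mapping.lookup m i)"
    using k unfolding \<mu>_def by (simp_all add: sum.remove[of "{..n}" k])
  ultimately show "(\<Sum>i\<le>n. \<mu> m i) = d - 1"
    using pos[OF m] by simp
next
  fix m i assume m: "m \<in> M" and i: "n < i"
  then have "i \<notin> Poly_Mapping.keys m"
    using vars[OF m] by auto
  then show "\<mu> m i = 0"
    using k i unfolding \<mu>_def by (simp add: in_keys_iff)
qed

lemma exists_partial_deriv_at_nonzero:
  fixes F :: "('a::{finite,field}) mpoly"
  assumes vars: "vars_within F n" and hom: "homogeneous F d" and d: "d \<le> CARD('a) + 1"
    and not_pth: "\<not> is_pth_power F"
  shows "\<exists>k a. k \<le> n \<and> partial_deriv_at F n k a \<noteq> 0"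
proof -
  obtain m1 k where m1: "m1 \<in> Poly_Mapping.keys F" "\<not> CHAR('a) dvd Poly_Mapping.lookup m1 k"
    using is_pth_power_if_exponents_divisible not_pth by blast
  then have "k \<in> Poly_Mapping.keys m1"
    by (metis dvd_0_right in_keys_iff)
  then have k: "k \<le> n"
    using vars m1(1) unfolding vars_within_def by auto
  define T where "T = {m \<in> Poly_Mapping.keys F. of_nat (Poly_Mapping.lookup m k) \<noteq> (0::'a)}"
  define c where "c m = Poly_Mapping.lookup F m * of_nat (Poly_Mapping.lookup m k)" for m
  define \<mu> :: "(nat \<Rightarrow>\<^sub>0 nat) \<Rightarrow> nat \<Rightarrow> nat"
    where "\<mu> = (\<lambda>m i. Poly_Mapping.lookup m i - (if i = k then 1 else 0))"
  have T_vars: "Poly_Mapping.keys m \<subseteq> {..n}" if "m \<in> T" for m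
    using vars that by (auto simp: T_def vars_within_def)
  have T_deg: "(\<Sum>i\<in>Poly_Mapping.keys m. Poly_Mapping.lookup m i) = d" if "m \<in> T" for m
    using hom that by (auto simp: T_def homogeneous_def)
  have T_pos: "0 < Poly_Mapping.lookup m k" if "m \<in> T" for m
    using that by (auto simp: T_def intro!: gr0I)
  have \<mu>: "inj_on \<mu> T" "\<And>m. m \<in> T \<Longrightarrow> (\<Sum>i\<le>n. \<mu> m i) = d - 1"
    "\<And>m i. m \<in> T \<Longrightarrow> n < i \<Longrightarrow> \<mu> m i = 0"
    unfolding \<mu>_def by (rule lowered_exponents[OF T_vars T_deg T_pos k]; assumption)+
  have T: "finite T" "T \<noteq> {}"
    using m1 by (auto simp: T_def of_nat_eq_0_iff_char_dvd)
  have c: "c m \<noteq> 0" if "m \<in> T" for m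
    using that by (auto simp: T_def c_def in_keys_iff)
  have e: "d - 1 \<le> CARD('a)"
    using d by simp
  obtain a where "(\<Sum>m\<in>T. c m * (\<Prod>i\<le>n. a i ^ \<mu> m i)) \<noteq> 0"
    using homogeneous_form_nonvanishing[of T \<mu> c n "d - 1", OF T \<mu>(1) c \<mu>(2) \<mu>(3) e] by blast
  moreover have "(\<Sum>m\<in>T. c m * (\<Prod>i\<le>n. a i ^ \<mu> m i)) = partial_deriv_at F n k a"
    unfolding partial_deriv_at_def c_def \<mu>_def by (rule sum.mono_neutral_left) (auto simp: T_def)
  ultimately show ?thesis
    using k by auto
qed

lemma coeff_1_msubst_monom_line:
  fixes a :: "nat \<Rightarrow> 'a::comm_semiring_1"
  assumes "Poly_Mapping.keys m \<subseteq> {..n}" "k \<le> n"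
  shows "coeff (msubst_monom (\<lambda>i. [:a i, if i = k then 1 else 0:]) m) 1 =
    of_nat (Poly_Mapping.lookup m k) * (\<Prod>i\<le>n. a i ^ (Poly_Mapping.lookup m i - (if i = k then 1 else 0)))"
proof -
  define e where "e = Poly_Mapping.lookup m k"
  define C where "C = (\<Prod>i\<in>{..n}-{k}. a i ^ Poly_Mapping.lookup m i)"
  have "msubst_monom (\<lambda>i. [:a i, if i = k then 1 else 0:]) m =
      (\<Prod>i\<le>n. [:a i, if i = k then 1 else 0:] ^ Poly_Mapping.lookup m i)"
    by (rule msubst_monom_superset) (use assms in auto)
  also have "\<dots> = [:a k, 1:] ^ e * (\<Prod>i\<in>{..n}-{k}. [:a i:] ^ Poly_Mapping.lookup m i)"
    using assms by (subst prod.remove[of _ k]) (auto simp: e_def intro!: prod.cong)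
  also have "(\<Prod>i\<in>{..n}-{k}. [:a i:] ^ Poly_Mapping.lookup m i) = [:C:]"
    unfolding C_def by (simp add: poly_const_pow prod_to_poly)
  finally have monom: "msubst_monom (\<lambda>i. [:a i, if i = k then 1 else 0:]) m = [:a k, 1:] ^ e * [:C:]" .
  have "(\<Prod>i\<le>n. a i ^ (Poly_Mapping.lookup m i - (if i = k then 1 else 0))) = a k ^ (e - 1) * C"
    using assms unfolding C_def e_def by (subst prod.remove[of _ k]) auto
  moreover have "coeff ([:a k, 1:] ^ e) 1 = of_nat e * a k ^ (e - 1)"
    using coeff_linear_poly_power[of 1 e "a k" 1] by (cases "e = 0") auto
  ultimately show ?thesis
    by (simp add: monom e_def[symmetric] mult.commute[of _ "[:C:]"] mult_ac)
qed

lemma coeff_1_msubst_line: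
  fixes F :: "'a::comm_semiring_1 mpoly"
  assumes "vars_within F n" "k \<le> n"
  shows "coeff (msubst (\<lambda>i. [:a i, if i = k then 1 else 0:]) F) 1 = partial_deriv_at F n k a"
  unfolding msubst_def partial_deriv_at_def coeff_sum
proof (intro sum.cong refl)
  fix m assume "m \<in> Poly_Mapping.keys F"
  then have "Poly_Mapping.keys m \<subseteq> {..n}"
    using assms(1) unfolding vars_within_def by auto
  from coeff_1_msubst_monom_line[OF this assms(2), of a]
  show "coeff (smult (Poly_Mapping.lookup F m) (msubst_monom (\<lambda>i. [:a i, if i = k then 1 else 0:]) m)) 1 =
      Poly_Mapping.lookup F m * of_nat (Poly_Mapping.lookup m k) *
      (\<Prod>i\<le>n. a i ^ (Poly_Mapping.lookup m i - (if i = k then 1 else 0)))"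
    by (simp add: mult.assoc)
qed

text \<open>Hypothesis \<open>line\<close>: in the coordinates \<open>\<phi>\<close>, the plane spanned by the columns of \<open>A\<close> contains
  the line \<open>a + t e\<^sub>k\<close>, with \<open>t\<close> the variable of \<open>'a poly\<close>.\<close>
lemma lin_subst_not_pth_power:
  fixes F :: "'a::field mpoly"
  assumes vars: "vars_within F n" and k: "k \<le> n" and nonzero: "partial_deriv_at F n k a \<noteq> 0"
    and line: "\<And>i. i \<le> n \<Longrightarrow> (\<Sum>j\<le>r. [:A i j:] * \<phi> j) = [:a i, if i = k then 1 else 0:]"
  shows "\<not> is_pth_power (lin_subst F A r)"
proof
  assume "is_pth_power (lin_subst F A r)"
  then obtain G where G: "lin_subst F A r = G ^ CHAR('a)"
    unfolding is_pth_power_def by blast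
  define U where "U = msubst \<phi> (lin_subst F A r)"
  have "U = msubst \<phi> G ^ CHAR('a)"
    unfolding U_def G by (simp add: msubst_power)
  then have "pderiv U = 0"
    by (simp add: pderiv_power of_nat_poly)
  then have "coeff U 1 = 0"
    using coeff_pderiv[of U 0] by simp
  moreover have "U = msubst (\<lambda>i. [:a i, if i = k then 1 else 0:]) F"
    unfolding U_def msubst_lin_subst by (rule msubst_cong[OF vars line])
  ultimately show False
    using coeff_1_msubst_line[OF vars k] nonzero by simp
qed

section \<open>Planes through a line\<close>

lemma indep_columns_triangular:
  fixes A :: "nat \<Rightarrow> nat \<Rightarrow> 'a::field" and \<rho> :: "nat \<Rightarrow> nat"
  assumes row: "\<And>j. j \<le> r \<Longrightarrow> \<rho> j \<le> n"
    and pivot: "\<And>j. j \<le> r \<Longrightarrow> A (\<rho> j) j \<noteq> 0"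
    and zero: "\<And>j j'. j < j' \<Longrightarrow> j' \<le> r \<Longrightarrow> A (\<rho> j) j' = 0"
  shows "indep_columns A n r"
  unfolding indep_columns_def
proof (intro allI impI)
  fix x :: "nat \<Rightarrow> 'a" and j
  assume combination: "\<forall>i\<le>n. (\<Sum>j\<le>r. A i j * x j) = 0"
  show "j \<le> r \<Longrightarrow> x j = 0"
  proof (induction j rule: less_induct)
    case (less j)
    have other: "A (\<rho> j) j' * x j' = 0" if "j' \<in> {..r} - {j}" for j'
    proof (cases "j' < j")
      case True
      then show ?thesis
        using less.IH that by simp
    next
      case False
      then show ?thesis
        using zero that by simp
    qed
    then have "(\<Sum>j'\<le>r. A (\<rho> j) j' * x j') = A (\<rho> j) j * x j"
      using less.prems by (simp add: sum.remove[of "{..r}" j] sum.neutral)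
    then show "x j = 0"
      using combination row[OF less.prems] pivot[OF less.prems] by simp
  qed
qed

lemma extend_to_indep_columns:
  fixes w :: "nat \<Rightarrow> 'a::field"
  assumes m: "m \<le> n" "m \<noteq> k" "w m \<noteq> 0" and k: "k \<le> n" and r: "r \<le> n - 1"
  shows "\<exists>A. indep_columns A n r \<and> (\<forall>i. A i 0 = w i) \<and> (\<forall>i. A i 1 = (if i = k then 1 else 0))"
proof -
  define L where "L = sorted_list_of_set ({..n} - {k, m})"
  have L: "set L = {..n} - {k, m}" "distinct L"
    by (simp_all add: L_def)
  have "length L = card ({..n} - {k, m})"
    by (simp add: L_def)
  also have "\<dots> = n - 1"
    using m k by (subst card_Diff_subset) auto
  finally have len: "length L = n - 1" .
  define A :: "nat \<Rightarrow> nat \<Rightarrow> 'a" where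
    "A i j = (if j = 0 then w i else if j = 1 then (if i = k then 1 else 0)
              else if i = L ! (j - 2) then 1 else 0)" for i j
  define \<rho> where "\<rho> j = (if j = 0 then m else if j = 1 then k else L ! (j - 2))" for j
  have L_nth: "L ! (j - 2) \<in> {..n} - {k, m}" if "2 \<le> j" "j \<le> r" for j
    using that r len nth_mem[of "j - 2" L] unfolding L(1) by linarith
  have \<rho>_L: "\<rho> j \<noteq> L ! (j' - 2)" if "j < j'" "2 \<le> j'" "j' \<le> r" for j j'
  proof (cases "j < 2")
    case True
    then show ?thesis
      using L_nth[OF that(2,3)] by (auto simp: \<rho>_def)
  next
    case False
    have "j - 2 < length L" "j' - 2 < length L" "j - 2 \<noteq> j' - 2"
      using that False r len by linarith+
    then show ?thesis
      using L(2) False by (simp add: \<rho>_def nth_eq_iff_index_eq)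
  qed
  have "indep_columns A n r"
  proof (rule indep_columns_triangular)
    show "\<rho> j \<le> n" if "j \<le> r" for j
      using that m k L_nth[of j] by (auto simp: \<rho>_def)
    show "A (\<rho> j) j \<noteq> 0" if "j \<le> r" for j
      using m by (simp add: A_def \<rho>_def)
    show "A (\<rho> j) j' = 0" if "j < j'" "j' \<le> r" for j j'
      using that m \<rho>_L[OF that(1) _ that(2)] by (auto simp: A_def \<rho>_def)
  qed
  then show ?thesis
    by (auto simp: A_def)
qed

lemma plane_through_line:
  fixes a :: "nat \<Rightarrow> 'a::field"
  assumes r: "1 \<le> r" "r \<le> n - 1" and k: "k \<le> n"
  shows "\<exists>A \<phi>. indep_columns A n r \<and>
    (\<forall>i\<le>n. (\<Sum>j\<le>r. [:A i j:] * \<phi> j) = [:a i, if i = k then 1 else 0:])"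
proof -
  obtain m w \<phi>\<^sub>0 \<phi>\<^sub>1 where m: "m \<le> n" "m \<noteq> k" "w m \<noteq> 0"
    and line: "\<And>i. i \<le> n \<Longrightarrow> [:w i:] * \<phi>\<^sub>0 + [:if i = k then 1 else 0:] * \<phi>\<^sub>1 = [:a i, if i = k then 1 else 0:]"
  proof (cases "\<exists>m\<le>n. m \<noteq> k \<and> a m \<noteq> 0")
    case True
    then obtain m where "m \<le> n" "m \<noteq> k" "a m \<noteq> 0"
      by blast
    then show thesis
      by (rule that[where w = a and \<phi>\<^sub>0 = 1 and \<phi>\<^sub>1 = "[:0, 1:]"]) simp
  next
    case False
    \<comment> \<open>Now \<open>a\<close> is a multiple of \<open>e\<^sub>k\<close>, so any \<open>e\<^sub>m\<close> with \<open>m \<noteq> k\<close> completes \<open>e\<^sub>k\<close> to a plane through the line.\<close>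
    define m where "m = (if k = 0 then 1 else 0 :: nat)"
    have "m \<le> n" "m \<noteq> k"
      using r k by (auto simp: m_def)
    then show thesis
      by (rule that[where w = "\<lambda>i. if i = m then 1 else 0" and \<phi>\<^sub>0 = 0 and \<phi>\<^sub>1 = "[:a k, 1:]"])
         (use False in auto)
  qed
  obtain A where A: "indep_columns A n r" "\<forall>i. A i 0 = w i" "\<forall>i. A i 1 = (if i = k then 1 else 0)"
    using extend_to_indep_columns[where w = w, OF m k r(2)] by blast
  define \<phi> :: "nat \<Rightarrow> 'a poly" where "\<phi> j = (if j = 0 then \<phi>\<^sub>0 else if j = 1 then \<phi>\<^sub>1 else 0)" for j
  have "(\<Sum>j\<le>r. [:A i j:] * \<phi> j) = [:A i 0:] * \<phi>\<^sub>0 + [:A i 1:] * \<phi>\<^sub>1" for i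
  proof -
    have "{..r} = {0, 1} \<union> {2..r}"
      using r by auto
    then show ?thesis
      by (simp add: \<phi>_def sum.union_disjoint)
  qed
  then show ?thesis
    using A line by (intro exI[of _ A] exI[of _ \<phi>]) simp
qed

theorem lemma2p1:
  fixes F :: "('a::{finite,field}) mpoly" and n d :: nat
  assumes "n \<ge> 2"
    and "F \<noteq> 0"
    and "vars_within F n"
    and "homogeneous F d"
    and "d \<le> CARD('a) + 1"
    and "\<not> is_pth_power F"
  shows "\<forall>r. 1 \<le> r \<and> r \<le> n - 1 \<longrightarrow>
           (\<exists>A :: nat \<Rightarrow> nat \<Rightarrow> 'a. indep_columns A n r \<and>
              lin_subst F A r \<noteq> 0 \<and> \<not> is_pth_power (lin_subst F A r))"
proof (intro allI impI)
  fix r assume r: "1 \<le> r \<and> r \<le> n - 1"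
  obtain k a where k: "k \<le> n" and nonzero: "partial_deriv_at F n k a \<noteq> 0"
    using exists_partial_deriv_at_nonzero[OF assms(3-6)] by blast
  obtain A \<phi> where A: "indep_columns A n r"
    and line: "\<forall>i\<le>n. (\<Sum>j\<le>r. [:A i j:] * \<phi> j) = [:a i, if i = k then 1 else 0:]"
    using plane_through_line[of r n k a] r k by blast
  have not_pth: "\<not> is_pth_power (lin_subst F A r)"
    using lin_subst_not_pth_power[OF assms(3) k nonzero] line by blast
  moreover have "is_pth_power (0 :: 'a mpoly)"
    unfolding is_pth_power_def
    by (intro exI[of _ 0]) (simp add: finite_imp_CHAR_pos zero_power)
  ultimately show "\<exists>A :: nat \<Rightarrow> nat \<Rightarrow> 'a. indep_columns A n r \<and>
      lin_subst F A r \<noteq> 0 \<and> \<not> is_pth_power (lin_subst F A r)"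
    using A by metis
qed

end
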